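(* Consider the multi-round profit license game with horizon $T$, stage costs $C_1,\dots,C_T>0$ and menus $\mathcal{F}_1,\dots,\mathcal{F}_T$. (i) If $\mathcal{F}_t\subseteq\mathcal{E}$ for every $t=1,\dots,T$, then the multi-round contract is incentive-aligned: for every $\theta_0\in\Theta_0$ and every agent strategy, $\mathbb{E}_{\theta_0}[L+P-C]\le 0$. (ii) Conversely, if $\mathcal{F}_t\not\subseteq\mathcal{E}$ for some $t$, then there exist $\theta_0\in\Theta_0$ and an agent strategy with $\mathbb{E}_{\theta_0}[L+P-C]>0$, so the contract is not incentive-aligned.
   Context: Let $\Theta=\Theta_0\sqcup\Theta_1$ be a set of types (null and nonnull) and $(P_\theta)_{\theta\in\Theta}$ probability distributions on a measurable space $\mathcal{Z}$. An $e$-value is a measurable $g:\mathcal{Z}\to[0,\infty)$ with $\mathbb{E}_{Z\sim P_\theta}[g(Z)]\le 1$ for every $\theta\in\Theta_0$; $\mathcal{E}$ is the set of $e$-values. Multi-round profit license game for an agent of type $\theta$: fix $T\ge1$, costs $C_1,\dots,C_T>0$, and menus $\mathcal{F}_1,\dots,\mathcal{F}_T$ of measurable functions $\mathcal{Z}\to[0,\infty)$. Set $L(0)=0$. For $t=1,\dots,T$: the agent chooses a withdrawal $P(t)\in[0,L(t-1)]$ and an indicator $I_t\in\{0,1\}$. If $I_t=1$, the agent pays $C_t$, chooses $f_t\in\mathcal{F}_t$, a fresh observation $Z_t\sim P_\theta$ independent of everything before is drawn, and $L(t)=(L(t-1)+C_t-P(t))\,f_t(Z_t)$. If $I_t=0$,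 $L(t)=L(t-1)-P(t)$. An agent strategy specifies $P(t)$, $I_t$ and $f_t$ as (measurable) functions of the history $(P(s),I_s,f_s,Z_s)_{s<t}$. The totals are $L=L(T)$, $P=\sum_{t=1}^T P(t)$ and $C=\sum_{t=1}^T C_tI_t$; $\mathbb{E}_\theta$ denotes expectation when the agent has type $\theta$. The multi-round contract is incentive-aligned if $\mathbb{E}_{\theta_0}[L+P-C]\le 0$ for every $\theta_0\in\Theta_0$ and every agent strategy. *)

theory Defs
  imports "HOL-Probability.Probability"
begin

definition e_value :: "'z measure \<Rightarrow> ('th \<Rightarrow> 'z measure) \<Rightarrow> 'th set \<Rightarrow> ('z \<Rightarrow> real) \<Rightarrow> bool" where
  "e_value M P \<Theta>0 g \<longleftrightarrow> g \<in> borel_measurable M \<and> (\<forall>z\<in>space M. 0 \<le> g z)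
     \<and> (\<forall>\<theta>\<in>\<Theta>0. (\<integral>\<^sup>+ z. ennreal (g z) \<partial>(P \<theta>)) \<le> 1)"

definition e_values :: "'z measure \<Rightarrow> ('th \<Rightarrow> 'z measure) \<Rightarrow> 'th set \<Rightarrow> ('z \<Rightarrow> real) set" where
  "e_values M P \<Theta>0 = {g. e_value M P \<Theta>0 g}"

(* A (deterministic) agent strategy: at round t (t = 1..T), given the observable history
   of the previous rounds, it returns (withdrawal P(t), indicator I_t, chosen function f_t).
   Since the strategy is deterministic, the past withdrawals, indicators and chosen functions
   are themselves functions of the past observations; hence the history is encoded by the list
   of past observations, with None for rounds in which no observation was drawn (I_s = 0). *)
type_synonym 'z strategy = "nat \<Rightarrow> 'z option list \<Rightarrow> real \<times> bool \<times> ('z \<Rightarrow> real)"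

(* omega t is the fresh observation Z_t used in round t (only if I_t = 1) *)
fun hist :: "'z strategy \<Rightarrow> (nat \<Rightarrow> 'z) \<Rightarrow> nat \<Rightarrow> 'z option list" where
  "hist \<sigma> \<omega> 0 = []"
| "hist \<sigma> \<omega> (Suc n) =
     hist \<sigma> \<omega> n @ [if fst (snd (\<sigma> (Suc n) (hist \<sigma> \<omega> n))) then Some (\<omega> (Suc n)) else None]"

definition wdr :: "'z strategy \<Rightarrow> (nat \<Rightarrow> 'z) \<Rightarrow> nat \<Rightarrow> real" where
  "wdr \<sigma> \<omega> t = fst (\<sigma> t (hist \<sigma> \<omega> (t - 1)))"

definition ind :: "'z strategy \<Rightarrow> (nat \<Rightarrow> 'z) \<Rightarrow> nat \<Rightarrow> bool" where
  "ind \<sigma> \<omega> t = fst (snd (\<sigma> t (hist \<sigma> \<omega> (t - 1))))"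

definition fch :: "'z strategy \<Rightarrow> (nat \<Rightarrow> 'z) \<Rightarrow> nat \<Rightarrow> ('z \<Rightarrow> real)" where
  "fch \<sigma> \<omega> t = snd (snd (\<sigma> t (hist \<sigma> \<omega> (t - 1))))"

fun wealth :: "(nat \<Rightarrow> real) \<Rightarrow> 'z strategy \<Rightarrow> (nat \<Rightarrow> 'z) \<Rightarrow> nat \<Rightarrow> real" where
  "wealth C \<sigma> \<omega> 0 = 0"
| "wealth C \<sigma> \<omega> (Suc n) =
     (if ind \<sigma> \<omega> (Suc n)
      then (wealth C \<sigma> \<omega> n + C (Suc n) - wdr \<sigma> \<omega> (Suc n)) * fch \<sigma> \<omega> (Suc n) (\<omega> (Suc n))
      else wealth C \<sigma> \<omega> n - wdr \<sigma> \<omega> (Suc n))"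

definition payoff :: "(nat \<Rightarrow> real) \<Rightarrow> nat \<Rightarrow> 'z strategy \<Rightarrow> (nat \<Rightarrow> 'z) \<Rightarrow> real" where
  "payoff C T \<sigma> \<omega> = wealth C \<sigma> \<omega> T + (\<Sum>t=1..T. wdr \<sigma> \<omega> t)
      - (\<Sum>t=1..T. if ind \<sigma> \<omega> t then C t else 0)"

definition game_space :: "('th \<Rightarrow> 'z measure) \<Rightarrow> 'th \<Rightarrow> nat \<Rightarrow> (nat \<Rightarrow> 'z) measure" where
  "game_space P \<theta> T = PiM {1..T} (\<lambda>_. P \<theta>)"

definition admissible :: "'z measure \<Rightarrow> (nat \<Rightarrow> ('z \<Rightarrow> real) set) \<Rightarrow> (nat \<Rightarrow> real) \<Rightarrow> nat
    \<Rightarrow> 'z strategy \<Rightarrow> bool" where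
  "admissible M F C T \<sigma> \<longleftrightarrow> (\<forall>t\<in>{1..T}.
      (\<forall>\<omega>\<in>space (PiM {1..T} (\<lambda>_. M)).
          0 \<le> wdr \<sigma> \<omega> t \<and> wdr \<sigma> \<omega> t \<le> wealth C \<sigma> \<omega> (t - 1)
          \<and> (ind \<sigma> \<omega> t \<longrightarrow> fch \<sigma> \<omega> t \<in> F t))
    \<and> (\<lambda>\<omega>. wdr \<sigma> \<omega> t) \<in> borel_measurable (PiM {1..T} (\<lambda>_. M))
    \<and> (\<lambda>\<omega>. ind \<sigma> \<omega> t) \<in> measurable (PiM {1..T} (\<lambda>_. M)) (count_space UNIV)
    \<and> (\<lambda>\<omega>. fch \<sigma> \<omega> t (\<omega> t)) \<in> borel_measurable (PiM {1..T} (\<lambda>_. M)))"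

(* Extended-real expectation E[X] = E[X^+] - E[X^-] (well defined here since the
   payoff is bounded below by -(C_1+...+C_T)) *)
definition ext_expectation :: "'a measure \<Rightarrow> ('a \<Rightarrow> real) \<Rightarrow> ereal" where
  "ext_expectation N X = enn2ereal (\<integral>\<^sup>+ \<omega>. ennreal (X \<omega>) \<partial>N)
                        - enn2ereal (\<integral>\<^sup>+ \<omega>. ennreal (- X \<omega>) \<partial>N)"

definition incentive_aligned :: "'z measure \<Rightarrow> ('th \<Rightarrow> 'z measure) \<Rightarrow> 'th set
    \<Rightarrow> (nat \<Rightarrow> ('z \<Rightarrow> real) set) \<Rightarrow> (nat \<Rightarrow> real) \<Rightarrow> nat \<Rightarrow> bool" where
  "incentive_aligned M P \<Theta>0 F C T \<longleftrightarrow>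
     (\<forall>\<theta>0\<in>\<Theta>0. \<forall>\<sigma>. admissible M F C T \<sigma> \<longrightarrow>
        ext_expectation (game_space P \<theta>0 T) (payoff C T \<sigma>) \<le> 0)"

end

theory Submission
  imports Defs
begin

text \<open>
  (i) Let the accrued value after round n be the licence value L(n) plus the withdrawals
  P(1) + \<dots> + P(n). Conditionally on the first n observations, round n+1 either leaves it
  unchanged, or stakes L(n) + C(n+1) - P(n+1) \<ge> 0 on an e-value while P(n+1) is banked.
  An e-value has mean at most 1 under a null type, so the expected accrued value grows by at most
  the expected cost C(n+1) I(n+1) paid in that round; after T rounds E[L + P] \<le> E[C].
  (ii) If f \<in> F t has mean above 1 under some null type, the agent who plays only round t,
  with f, and never withdraws has payoff C(t) (f(Z(t)) - 1), whose mean is positive.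
\<close>

lemma ennreal_diff_add_swap:
  "0 \<le> (a::real) \<Longrightarrow> 0 \<le> b \<Longrightarrow> ennreal (a - b) + ennreal b = ennreal a + ennreal (b - a)"
  by (cases "b \<le> a") (simp_all add: ennreal_plus[symmetric] ennreal_eq_0_iff del: ennreal_plus)

lemma enn2ereal_diff_eq_diff:
  fixes x y z w :: ennreal
  assumes "x + y = z + w" and "y < \<top>" and "w < \<top>"
  shows "enn2ereal x - enn2ereal w = enn2ereal z - enn2ereal y"
  using assms
  by (cases x rule: ennreal_cases; cases y rule: ennreal_cases;
      cases z rule: ennreal_cases; cases w rule: ennreal_cases)
     (auto simp: ennreal_plus[symmetric] simp del: ennreal_plus)

lemma ext_expectation_diff:
  fixes A B :: "'a \<Rightarrow> real"
  assumes [measurable]: "A \<in> borel_measurable N" "B \<in> borel_measurable N"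
    and nonneg: "\<And>\<omega>. \<omega> \<in> space N \<Longrightarrow> 0 \<le> A \<omega> \<and> 0 \<le> B \<omega>"
    and finite: "(\<integral>\<^sup>+\<omega>. B \<omega> \<partial>N) < \<top>"
  shows "ext_expectation N (\<lambda>\<omega>. A \<omega> - B \<omega>)
           = enn2ereal (\<integral>\<^sup>+\<omega>. A \<omega> \<partial>N) - enn2ereal (\<integral>\<^sup>+\<omega>. B \<omega> \<partial>N)"
proof -
  define pos where "pos = (\<integral>\<^sup>+\<omega>. ennreal (A \<omega> - B \<omega>) \<partial>N)"
  define neg where "neg = (\<integral>\<^sup>+\<omega>. ennreal (- (A \<omega> - B \<omega>)) \<partial>N)"
  have "pos + (\<integral>\<^sup>+\<omega>. B \<omega> \<partial>N) = (\<integral>\<^sup>+\<omega>. ennreal (A \<omega> - B \<omega>) + ennreal (B \<omega>) \<partial>N)"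
    unfolding pos_def by (simp add: nn_integral_add)
  also have "\<dots> = (\<integral>\<^sup>+\<omega>. ennreal (A \<omega>) + ennreal (B \<omega> - A \<omega>) \<partial>N)"
    using nonneg by (intro nn_integral_cong ennreal_diff_add_swap) auto
  also have "\<dots> = (\<integral>\<^sup>+\<omega>. A \<omega> \<partial>N) + neg"
    unfolding neg_def by (simp add: nn_integral_add)
  finally have balance: "pos + (\<integral>\<^sup>+\<omega>. B \<omega> \<partial>N) = (\<integral>\<^sup>+\<omega>. A \<omega> \<partial>N) + neg" .
  have "neg \<le> (\<integral>\<^sup>+\<omega>. B \<omega> \<partial>N)"
    unfolding neg_def using nonneg by (intro nn_integral_mono ennreal_leI) auto
  then have "neg < \<top>" using finite by (rule le_less_trans)
  with balance finite show ?thesis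
    unfolding ext_expectation_def pos_def[symmetric] neg_def[symmetric]
    by (rule enn2ereal_diff_eq_diff)
qed

lemma nn_integral_PiM_component:
  assumes "prob_space Q" and "i \<in> I" and "h \<in> borel_measurable Q"
  shows "(\<integral>\<^sup>+\<omega>. h (\<omega> i) \<partial>PiM I (\<lambda>_. Q)) = (\<integral>\<^sup>+z. h z \<partial>Q)"
proof -
  have "distr (PiM I (\<lambda>_. Q)) Q (\<lambda>\<omega>. \<omega> i) = Q"
    using distr_PiM_component[of I "\<lambda>_. Q" i] assms(1,2) by simp
  with assms(2,3) show ?thesis
    by (metis measurable_component_singleton nn_integral_distr)
qed

lemma nn_integral_PiM_le_by_section:
  fixes Q :: "'z measure"
  assumes "prob_space Q" and "finite I" and "i \<in> I"
    and F[measurable]: "F \<in> borel_measurable (PiM I (\<lambda>_. Q))"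
    and K[measurable]: "K \<in> borel_measurable (PiM I (\<lambda>_. Q))"
    and K_indep: "\<And>x y. x \<in> space (PiM I (\<lambda>_. Q)) \<Longrightarrow> y \<in> space Q \<Longrightarrow> K (x(i := y)) = K x"
    and section_le: "\<And>x. x \<in> space (PiM I (\<lambda>_. Q)) \<Longrightarrow> (\<integral>\<^sup>+y. F (x(i := y)) \<partial>Q) \<le> K x"
  shows "(\<integral>\<^sup>+\<omega>. F \<omega> \<partial>PiM I (\<lambda>_. Q)) \<le> (\<integral>\<^sup>+\<omega>. K \<omega> \<partial>PiM I (\<lambda>_. Q))"
proof -
  interpret Q: prob_space Q by fact
  interpret product_sigma_finite "\<lambda>_. Q"
    by (simp add: product_sigma_finite_def Q.sigma_finite_measure_axioms)
  obtain y0 where y0: "y0 \<in> space Q" using Q.not_empty by blast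
  have I: "I = insert i (I - {i})" using \<open>i \<in> I\<close> by auto
  have "(\<integral>\<^sup>+y. F (x(i := y)) \<partial>Q) \<le> (\<integral>\<^sup>+y. K (x(i := y)) \<partial>Q)"
    if x: "x \<in> space (PiM (I - {i}) (\<lambda>_. Q))" for x
  proof -
    have x': "x(i := y0) \<in> space (PiM I (\<lambda>_. Q))"
      using x y0 \<open>i \<in> I\<close> by (auto simp: space_PiM PiE_iff extensional_def)
    have "(\<integral>\<^sup>+y. F (x(i := y)) \<partial>Q) \<le> K (x(i := y0))"
      using section_le[OF x'] by simp
    also have "\<dots> = (\<integral>\<^sup>+y. K (x(i := y)) \<partial>Q)"
      using K_indep[OF x'] by (simp add: nn_integral_cong Q.emeasure_space_1)
    finally show ?thesis .
  qed
  then show ?thesis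
    using product_nn_integral_insert[of "I - {i}" i F] product_nn_integral_insert[of "I - {i}" i K]
      \<open>finite I\<close> I by (simp add: nn_integral_mono)
qed

lemma nn_integral_stake_e_value_le:
  fixes f :: "'z \<Rightarrow> real" and a b :: real
  assumes "prob_space Q" and [measurable]: "f \<in> borel_measurable Q"
    and f_nonneg: "\<And>z. z \<in> space Q \<Longrightarrow> 0 \<le> f z" and f_e_value: "(\<integral>\<^sup>+z. f z \<partial>Q) \<le> 1"
    and "0 \<le> b" and "0 \<le> a"
  shows "(\<integral>\<^sup>+z. b * f z + a \<partial>Q) \<le> ennreal (b + a)"
proof -
  interpret Q: prob_space Q by fact
  have "(\<integral>\<^sup>+z. b * f z + a \<partial>Q) = (\<integral>\<^sup>+z. ennreal b * ennreal (f z) + ennreal a \<partial>Q)"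
    using f_nonneg \<open>0 \<le> b\<close> \<open>0 \<le> a\<close> by (intro nn_integral_cong) (simp add: ennreal_mult)
  also have "\<dots> = ennreal b * (\<integral>\<^sup>+z. f z \<partial>Q) + ennreal a"
    by (simp add: nn_integral_add nn_integral_cmult Q.emeasure_space_1)
  also have "\<dots> \<le> ennreal b + ennreal a"
    using mult_left_mono[OF f_e_value] by (simp add: add_right_mono)
  finally show ?thesis using \<open>0 \<le> b\<close> \<open>0 \<le> a\<close> by (simp add: ennreal_plus)
qed

lemma hist_cong: "(\<And>s. s \<in> {1..n} \<Longrightarrow> \<omega> s = \<omega>' s) \<Longrightarrow> hist \<sigma> \<omega> n = hist \<sigma> \<omega>' n"
  by (induction n) auto

lemma hist_before_cong:
  "\<forall>s\<in>{1..<t}. \<omega> s = \<omega>' s \<Longrightarrow> hist \<sigma> \<omega> (t - 1) = hist \<sigma> \<omega>' (t - 1)"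
  by (intro hist_cong) auto

lemma wdr_cong: "\<forall>s\<in>{1..<t}. \<omega> s = \<omega>' s \<Longrightarrow> wdr \<sigma> \<omega> t = wdr \<sigma> \<omega>' t"
  unfolding wdr_def by (simp only: hist_before_cong)

lemma ind_cong: "\<forall>s\<in>{1..<t}. \<omega> s = \<omega>' s \<Longrightarrow> ind \<sigma> \<omega> t = ind \<sigma> \<omega>' t"
  unfolding ind_def by (simp only: hist_before_cong)

lemma fch_cong: "\<forall>s\<in>{1..<t}. \<omega> s = \<omega>' s \<Longrightarrow> fch \<sigma> \<omega> t = fch \<sigma> \<omega>' t"
  unfolding fch_def by (simp only: hist_before_cong)

lemma wealth_cong: "(\<And>s. s \<in> {1..n} \<Longrightarrow> \<omega> s = \<omega>' s) \<Longrightarrow> wealth C \<sigma> \<omega> n = wealth C \<sigma> \<omega>' n"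
proof (induction n)
  case (Suc n)
  then have agree: "\<forall>s\<in>{1..<Suc n}. \<omega> s = \<omega>' s" by auto
  with Suc show ?case by (simp add: wdr_cong[OF agree] ind_cong[OF agree] fch_cong[OF agree])
qed simp

definition accrued :: "(nat \<Rightarrow> real) \<Rightarrow> 'z strategy \<Rightarrow> (nat \<Rightarrow> 'z) \<Rightarrow> nat \<Rightarrow> real" where
  "accrued C \<sigma> \<omega> n = wealth C \<sigma> \<omega> n + (\<Sum>t=1..n. wdr \<sigma> \<omega> t)"

definition costs_paid :: "(nat \<Rightarrow> real) \<Rightarrow> 'z strategy \<Rightarrow> (nat \<Rightarrow> 'z) \<Rightarrow> nat \<Rightarrow> real" where
  "costs_paid C \<sigma> \<omega> n = (\<Sum>t=1..n. if ind \<sigma> \<omega> t then C t else 0)"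

lemma accrued_cong:
  assumes "\<forall>s\<in>{1..n}. \<omega> s = \<omega>' s"
  shows "accrued C \<sigma> \<omega> n = accrued C \<sigma> \<omega>' n"
proof -
  have "wdr \<sigma> \<omega> t = wdr \<sigma> \<omega>' t" if "t \<in> {1..n}" for t
    using assms that by (intro wdr_cong) auto
  moreover have "wealth C \<sigma> \<omega> n = wealth C \<sigma> \<omega>' n"
    using assms by (intro wealth_cong) auto
  ultimately show ?thesis
    unfolding accrued_def by simp
qed

lemma payoff_eq_accrued_minus_costs_paid:
  "payoff C T \<sigma> \<omega> = accrued C \<sigma> \<omega> T - costs_paid C \<sigma> \<omega> T"
  by (simp add: payoff_def accrued_def costs_paid_def)

lemma accrued_Suc_fun_upd:
  "accrued C \<sigma> (x(Suc n := y)) (Suc n) =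
     (if ind \<sigma> x (Suc n)
      then (wealth C \<sigma> x n + C (Suc n) - wdr \<sigma> x (Suc n)) * fch \<sigma> x (Suc n) y
             + (accrued C \<sigma> x n - wealth C \<sigma> x n + wdr \<sigma> x (Suc n))
      else accrued C \<sigma> x n)"
proof -
  let ?x' = "x(Suc n := y)"
  have round: "wdr \<sigma> ?x' t = wdr \<sigma> x t" "ind \<sigma> ?x' t = ind \<sigma> x t" "fch \<sigma> ?x' t = fch \<sigma> x t"
    if "t \<le> Suc n" for t
  proof -
    have agree: "\<forall>s\<in>{1..<t}. ?x' s = x s" using that by auto
    show "wdr \<sigma> ?x' t = wdr \<sigma> x t" "ind \<sigma> ?x' t = ind \<sigma> x t" "fch \<sigma> ?x' t = fch \<sigma> x t"
      by (fact wdr_cong[OF agree] ind_cong[OF agree] fch_cong[OF agree])+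
  qed
  have "wealth C \<sigma> ?x' n = wealth C \<sigma> x n" by (rule wealth_cong) simp
  moreover have "(\<Sum>t=1..n. wdr \<sigma> ?x' t) = (\<Sum>t=1..n. wdr \<sigma> x t)"
    using round(1) by (intro sum.cong) auto
  ultimately show ?thesis by (simp add: accrued_def round)
qed

lemma costs_paid_Suc:
  "costs_paid C \<sigma> \<omega> (Suc n) = costs_paid C \<sigma> \<omega> n + (if ind \<sigma> \<omega> (Suc n) then C (Suc n) else 0)"
  by (simp add: costs_paid_def)

text \<open>Q is the observation law P \<theta> of a null type \<theta>, under which all menus consist of e-values.\<close>

context
  fixes M Q :: "'z measure" and F :: "nat \<Rightarrow> ('z \<Rightarrow> real) set" and C :: "nat \<Rightarrow> real"
    and T :: nat and \<sigma> :: "'z strategy"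
  assumes prob_space_Q: "prob_space Q" and sets_Q: "sets Q = sets M"
    and admissible: "admissible M F C T \<sigma>"
    and C_pos: "\<And>t. t \<in> {1..T} \<Longrightarrow> 0 < C t"
    and menus_e_values: "\<And>t f. t \<in> {1..T} \<Longrightarrow> f \<in> F t \<Longrightarrow>
          f \<in> borel_measurable M \<and> (\<forall>z\<in>space M. 0 \<le> f z) \<and> (\<integral>\<^sup>+z. f z \<partial>Q) \<le> 1"
begin

abbreviation \<Omega> :: "(nat \<Rightarrow> 'z) measure" where
  "\<Omega> \<equiv> PiM {1..T} (\<lambda>_. Q)"

lemma sets_\<Omega>: "sets \<Omega> = sets (PiM {1..T} (\<lambda>_. M))"
  by (intro sets_PiM_cong) (auto simp: sets_Q)

lemma measurable_\<Omega>: "measurable \<Omega> N = measurable (PiM {1..T} (\<lambda>_. M)) N"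
  by (intro measurable_cong_sets sets_\<Omega> refl)

lemma space_\<Omega>: "space \<Omega> = space (PiM {1..T} (\<lambda>_. M))"
  by (intro sets_eq_imp_space_eq sets_\<Omega>)

lemma space_Q: "space Q = space M"
  by (intro sets_eq_imp_space_eq sets_Q)

lemma wdr_nonneg: "t \<in> {1..T} \<Longrightarrow> \<omega> \<in> space \<Omega> \<Longrightarrow> 0 \<le> wdr \<sigma> \<omega> t"
  using admissible unfolding admissible_def space_\<Omega> by blast

lemma wdr_le_wealth: "t \<in> {1..T} \<Longrightarrow> \<omega> \<in> space \<Omega> \<Longrightarrow> wdr \<sigma> \<omega> t \<le> wealth C \<sigma> \<omega> (t - 1)"
  using admissible unfolding admissible_def space_\<Omega> by blast

lemma fch_in_menu: "t \<in> {1..T} \<Longrightarrow> \<omega> \<in> space \<Omega> \<Longrightarrow> ind \<sigma> \<omega> t \<Longrightarrow> fch \<sigma> \<omega> t \<in> F t"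
  using admissible unfolding admissible_def space_\<Omega> by blast

lemma wdr_measurable: "t \<in> {1..T} \<Longrightarrow> (\<lambda>\<omega>. wdr \<sigma> \<omega> t) \<in> borel_measurable \<Omega>"
  using admissible unfolding admissible_def measurable_\<Omega> by blast

lemma ind_measurable: "t \<in> {1..T} \<Longrightarrow> (\<lambda>\<omega>. ind \<sigma> \<omega> t) \<in> measurable \<Omega> (count_space UNIV)"
  using admissible unfolding admissible_def measurable_\<Omega> by blast

lemma fch_measurable: "t \<in> {1..T} \<Longrightarrow> (\<lambda>\<omega>. fch \<sigma> \<omega> t (\<omega> t)) \<in> borel_measurable \<Omega>"
  using admissible unfolding admissible_def measurable_\<Omega> by blast

lemma wealth_measurable: "n \<le> T \<Longrightarrow> (\<lambda>\<omega>. wealth C \<sigma> \<omega> n) \<in> borel_measurable \<Omega>"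
proof (induction n)
  case (Suc n)
  then have t: "Suc n \<in> {1..T}" by simp
  note [measurable] = Suc.IH[OF Suc_leD[OF Suc.prems]]
    wdr_measurable[OF t] ind_measurable[OF t] fch_measurable[OF t]
  show ?case unfolding wealth.simps by measurable
qed simp

lemma wealth_nonneg: "n \<le> T \<Longrightarrow> \<omega> \<in> space \<Omega> \<Longrightarrow> 0 \<le> wealth C \<sigma> \<omega> n"
proof (induction n)
  case (Suc n)
  then have t: "Suc n \<in> {1..T}" by simp
  have "0 \<le> fch \<sigma> \<omega> (Suc n) (\<omega> (Suc n))" if "ind \<sigma> \<omega> (Suc n)"
  proof -
    have "\<omega> (Suc n) \<in> space M"
      using Suc.prems t by (auto simp: space_PiM space_Q)
    then show ?thesis
      using menus_e_values[OF t fch_in_menu[OF t Suc.prems(2) that]] by blast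
  qed
  with Suc wdr_le_wealth[OF t Suc.prems(2)] C_pos[OF t] show ?case by simp
qed simp

lemma accrued_measurable: "n \<le> T \<Longrightarrow> (\<lambda>\<omega>. accrued C \<sigma> \<omega> n) \<in> borel_measurable \<Omega>"
  unfolding accrued_def by (intro borel_measurable_add wealth_measurable borel_measurable_sum wdr_measurable) auto

lemma round_cost_measurable:
  "t \<in> {1..T} \<Longrightarrow> (\<lambda>\<omega>. if ind \<sigma> \<omega> t then C t else 0) \<in> borel_measurable \<Omega>"
  using ind_measurable[of t] by measurable

lemma costs_paid_measurable: "n \<le> T \<Longrightarrow> (\<lambda>\<omega>. costs_paid C \<sigma> \<omega> n) \<in> borel_measurable \<Omega>"
  unfolding costs_paid_def by (intro borel_measurable_sum round_cost_measurable) auto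

lemma accrued_nonneg: "n \<le> T \<Longrightarrow> \<omega> \<in> space \<Omega> \<Longrightarrow> 0 \<le> accrued C \<sigma> \<omega> n"
  unfolding accrued_def by (intro add_nonneg_nonneg wealth_nonneg sum_nonneg wdr_nonneg) auto

lemma costs_paid_nonneg: "n \<le> T \<Longrightarrow> 0 \<le> costs_paid C \<sigma> \<omega> n"
  unfolding costs_paid_def using C_pos by (intro sum_nonneg) (auto simp: less_imp_le)

lemma accrued_section_le:
  assumes "n < T" and x: "x \<in> space \<Omega>"
  shows "(\<integral>\<^sup>+y. accrued C \<sigma> (x(Suc n := y)) (Suc n) \<partial>Q)
           \<le> accrued C \<sigma> x n + (if ind \<sigma> x (Suc n) then C (Suc n) else 0)"
proof (cases "ind \<sigma> x (Suc n)")
  case True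
  have t: "Suc n \<in> {1..T}" using \<open>n < T\<close> by simp
  define f where "f = fch \<sigma> x (Suc n)"
  define stake where "stake = wealth C \<sigma> x n + C (Suc n) - wdr \<sigma> x (Suc n)"
  define reserve where "reserve = accrued C \<sigma> x n - wealth C \<sigma> x n + wdr \<sigma> x (Suc n)"
  have f: "f \<in> borel_measurable Q" "\<And>z. z \<in> space Q \<Longrightarrow> 0 \<le> f z" "(\<integral>\<^sup>+z. f z \<partial>Q) \<le> 1"
    using menus_e_values[OF t fch_in_menu[OF t x True]]
    by (auto simp: f_def space_Q measurable_cong_sets[OF sets_Q refl])
  have "0 \<le> stake"
    using wdr_le_wealth[OF t x] C_pos[OF t] by (simp add: stake_def)
  moreover have "0 \<le> reserve"
    unfolding reserve_def accrued_def using t x by (auto intro!: add_nonneg_nonneg sum_nonneg wdr_nonneg)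
  ultimately have "(\<integral>\<^sup>+y. stake * f y + reserve \<partial>Q) \<le> ennreal (stake + reserve)"
    using f by (intro nn_integral_stake_e_value_le prob_space_Q)
  then show ?thesis
    using True by (simp add: accrued_Suc_fun_upd f_def stake_def reserve_def add.commute)
next
  case False
  then show ?thesis
    using prob_space.emeasure_space_1[OF prob_space_Q] by (simp add: accrued_Suc_fun_upd)
qed

lemma nn_integral_accrued_Suc_le:
  assumes "n < T"
  shows "(\<integral>\<^sup>+\<omega>. accrued C \<sigma> \<omega> (Suc n) \<partial>\<Omega>)
           \<le> (\<integral>\<^sup>+\<omega>. accrued C \<sigma> \<omega> n \<partial>\<Omega>) + (\<integral>\<^sup>+\<omega>. (if ind \<sigma> \<omega> (Suc n) then C (Suc n) else 0) \<partial>\<Omega>)"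
proof -
  have t: "Suc n \<in> {1..T}" and "n \<le> T" "Suc n \<le> T" using assms by simp_all
  note [measurable] = accrued_measurable[OF \<open>n \<le> T\<close>] accrued_measurable[OF \<open>Suc n \<le> T\<close>]
    round_cost_measurable[OF t]
  have "(\<integral>\<^sup>+\<omega>. accrued C \<sigma> \<omega> (Suc n) \<partial>\<Omega>)
          \<le> (\<integral>\<^sup>+\<omega>. accrued C \<sigma> \<omega> n + (if ind \<sigma> \<omega> (Suc n) then C (Suc n) else 0) \<partial>\<Omega>)"
  proof (rule nn_integral_PiM_le_by_section[OF prob_space_Q _ t])
    show "(\<lambda>\<omega>. ennreal (accrued C \<sigma> \<omega> (Suc n))) \<in> borel_measurable \<Omega>"
      and "(\<lambda>\<omega>. ennreal (accrued C \<sigma> \<omega> n + (if ind \<sigma> \<omega> (Suc n) then C (Suc n) else 0)))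
             \<in> borel_measurable \<Omega>"
      by measurable
  next
    fix x y assume "x \<in> space \<Omega>"
    have before: "\<forall>s\<in>{1..<Suc n}. (x(Suc n := y)) s = x s" and upto: "\<forall>s\<in>{1..n}. (x(Suc n := y)) s = x s"
      by simp_all
    show "ennreal (accrued C \<sigma> (x(Suc n := y)) n + (if ind \<sigma> (x(Suc n := y)) (Suc n) then C (Suc n) else 0))
          = ennreal (accrued C \<sigma> x n + (if ind \<sigma> x (Suc n) then C (Suc n) else 0))"
      by (simp only: accrued_cong[OF upto] ind_cong[OF before])
  qed (use accrued_section_le[OF assms] in simp_all)
  also have "\<dots> = (\<integral>\<^sup>+\<omega>. accrued C \<sigma> \<omega> n \<partial>\<Omega>) + (\<integral>\<^sup>+\<omega>. (if ind \<sigma> \<omega> (Suc n) then C (Suc n) else 0) \<partial>\<Omega>)"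
  proof -
    have "\<And>\<omega>. \<omega> \<in> space \<Omega> \<Longrightarrow> 0 \<le> accrued C \<sigma> \<omega> n" "0 \<le> C (Suc n)"
      using accrued_nonneg \<open>n \<le> T\<close> C_pos[OF t] by simp_all
    then have "(\<integral>\<^sup>+\<omega>. accrued C \<sigma> \<omega> n + (if ind \<sigma> \<omega> (Suc n) then C (Suc n) else 0) \<partial>\<Omega>)
        = (\<integral>\<^sup>+\<omega>. ennreal (accrued C \<sigma> \<omega> n) + ennreal (if ind \<sigma> \<omega> (Suc n) then C (Suc n) else 0) \<partial>\<Omega>)"
      by (intro nn_integral_cong) simp
    also have "\<dots> = (\<integral>\<^sup>+\<omega>. accrued C \<sigma> \<omega> n \<partial>\<Omega>) + (\<integral>\<^sup>+\<omega>. (if ind \<sigma> \<omega> (Suc n) then C (Suc n) else 0) \<partial>\<Omega>)"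
      by (rule nn_integral_add) measurable
    finally show ?thesis .
  qed
  finally show ?thesis .
qed

lemma nn_integral_accrued_le_costs_paid:
  "n \<le> T \<Longrightarrow> (\<integral>\<^sup>+\<omega>. accrued C \<sigma> \<omega> n \<partial>\<Omega>) \<le> (\<integral>\<^sup>+\<omega>. costs_paid C \<sigma> \<omega> n \<partial>\<Omega>)"
proof (induction n)
  case 0
  then show ?case by (simp add: accrued_def costs_paid_def)
next
  case (Suc n)
  then have t: "Suc n \<in> {1..T}" and "n \<le> T" by simp_all
  note [measurable] = costs_paid_measurable[OF \<open>n \<le> T\<close>] round_cost_measurable[OF t]
  have "(\<integral>\<^sup>+\<omega>. accrued C \<sigma> \<omega> (Suc n) \<partial>\<Omega>)
      \<le> (\<integral>\<^sup>+\<omega>. accrued C \<sigma> \<omega> n \<partial>\<Omega>) + (\<integral>\<^sup>+\<omega>. (if ind \<sigma> \<omega> (Suc n) then C (Suc n) else 0) \<partial>\<Omega>)"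
    using Suc.prems by (intro nn_integral_accrued_Suc_le) simp
  also have "\<dots> \<le> (\<integral>\<^sup>+\<omega>. costs_paid C \<sigma> \<omega> n \<partial>\<Omega>) + (\<integral>\<^sup>+\<omega>. (if ind \<sigma> \<omega> (Suc n) then C (Suc n) else 0) \<partial>\<Omega>)"
    using Suc.IH \<open>n \<le> T\<close> by (intro add_right_mono) simp
  also have "\<dots> = (\<integral>\<^sup>+\<omega>. ennreal (costs_paid C \<sigma> \<omega> n) + ennreal (if ind \<sigma> \<omega> (Suc n) then C (Suc n) else 0) \<partial>\<Omega>)"
    by (rule nn_integral_add[symmetric]) measurable
  also have "\<dots> = (\<integral>\<^sup>+\<omega>. costs_paid C \<sigma> \<omega> (Suc n) \<partial>\<Omega>)"
    using costs_paid_nonneg[OF \<open>n \<le> T\<close>] C_pos[OF t]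
    by (intro nn_integral_cong) (simp add: costs_paid_Suc)
  finally show ?case .
qed

theorem ext_expectation_payoff_nonpos: "ext_expectation \<Omega> (payoff C T \<sigma>) \<le> 0"
proof -
  have \<Omega>: "prob_space \<Omega>" by (intro prob_space_PiM prob_space_Q)
  have "(\<integral>\<^sup>+\<omega>. costs_paid C \<sigma> \<omega> T \<partial>\<Omega>) \<le> (\<integral>\<^sup>+\<omega>. (\<Sum>t=1..T. C t) \<partial>\<Omega>)"
    unfolding costs_paid_def using C_pos
    by (intro nn_integral_mono ennreal_leI sum_mono) (auto simp: less_imp_le)
  also have "\<dots> = ennreal (\<Sum>t=1..T. C t)"
    unfolding nn_integral_const prob_space.emeasure_space_1[OF \<Omega>] by simp
  finally have finite: "(\<integral>\<^sup>+\<omega>. costs_paid C \<sigma> \<omega> T \<partial>\<Omega>) < \<top>"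
    using le_less_trans by fastforce
  have "ext_expectation \<Omega> (payoff C T \<sigma>)
      = enn2ereal (\<integral>\<^sup>+\<omega>. accrued C \<sigma> \<omega> T \<partial>\<Omega>) - enn2ereal (\<integral>\<^sup>+\<omega>. costs_paid C \<sigma> \<omega> T \<partial>\<Omega>)"
    unfolding payoff_eq_accrued_minus_costs_paid
    using accrued_measurable costs_paid_measurable accrued_nonneg costs_paid_nonneg finite
    by (intro ext_expectation_diff) auto
  also have "\<dots> \<le> 0"
    using nn_integral_accrued_le_costs_paid[of T] finite
    by (simp add: ereal_minus_le less_eq_ennreal.rep_eq)
  finally show ?thesis .
qed

end

definition play_once :: "nat \<Rightarrow> ('z \<Rightarrow> real) \<Rightarrow> 'z strategy" where
  "play_once t f = (\<lambda>s _. (0, s = t, f))"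

lemma wdr_play_once [simp]: "wdr (play_once t f) \<omega> s = 0"
  by (simp add: play_once_def wdr_def)

lemma ind_play_once [simp]: "ind (play_once t f) \<omega> s \<longleftrightarrow> s = t"
  by (simp add: play_once_def ind_def)

lemma fch_play_once [simp]: "fch (play_once t f) \<omega> s = f"
  by (simp add: play_once_def fch_def)

lemma wealth_play_once:
  "0 < t \<Longrightarrow> wealth C (play_once t f) \<omega> n = (if t \<le> n then C t * f (\<omega> t) else 0)"
  by (induction n) (auto simp: le_Suc_eq)

lemma payoff_play_once:
  "t \<in> {1..T} \<Longrightarrow> payoff C T (play_once t f) \<omega> = C t * f (\<omega> t) - C t"
  by (simp add: payoff_def wealth_play_once sum.delta')

lemma admissible_play_once:
  assumes t: "t \<in> {1..T}" and "f \<in> F t" and f_meas: "f \<in> borel_measurable M"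
    and f_nonneg: "\<forall>z\<in>space M. 0 \<le> f z" and "0 < C t"
  shows "admissible M F C T (play_once t f)"
  unfolding admissible_def
proof (intro ballI conjI)
  fix s \<omega> assume "s \<in> {1..T}" and "\<omega> \<in> space (PiM {1..T} (\<lambda>_. M))"
  then have "0 \<le> f (\<omega> t)" using t f_nonneg by (auto simp: space_PiM)
  moreover have "wealth C (play_once t f) \<omega> n = (if t \<le> n then C t * f (\<omega> t) else 0)" for n
    using t by (induction n) (auto simp: play_once_def wdr_def ind_def fch_def le_Suc_eq)
  ultimately show "0 \<le> wdr (play_once t f) \<omega> s" "wdr (play_once t f) \<omega> s \<le> wealth C (play_once t f) \<omega> (s - 1)"
    using t \<open>0 < C t\<close> by (simp_all add: play_once_def wdr_def)
  show "ind (play_once t f) \<omega> s \<longrightarrow> fch (play_once t f) \<omega> s \<in> F s"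
    using \<open>f \<in> F t\<close> by (simp add: play_once_def ind_def fch_def)
next
  fix s assume "s \<in> {1..T}"
  show "(\<lambda>\<omega>. wdr (play_once t f) \<omega> s) \<in> borel_measurable (PiM {1..T} (\<lambda>_. M))"
    and "(\<lambda>\<omega>. ind (play_once t f) \<omega> s) \<in> measurable (PiM {1..T} (\<lambda>_. M)) (count_space UNIV)"
    by (simp_all add: play_once_def wdr_def ind_def)
  show "(\<lambda>\<omega>. fch (play_once t f) \<omega> s (\<omega> s)) \<in> borel_measurable (PiM {1..T} (\<lambda>_. M))"
    using measurable_compose[OF measurable_component_singleton[OF \<open>s \<in> {1..T}\<close>] f_meas]
    by (simp add: play_once_def fch_def)
qed

lemma ext_expectation_payoff_play_once_pos:
  assumes "prob_space Q" and sets_Q: "sets Q = sets M" and t: "t \<in> {1..T}"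
    and f_meas: "f \<in> borel_measurable M" and f_nonneg: "\<forall>z\<in>space M. 0 \<le> f z"
    and "0 < C t" and not_e_value: "1 < (\<integral>\<^sup>+z. f z \<partial>Q)"
  shows "0 < ext_expectation (PiM {1..T} (\<lambda>_. Q)) (payoff C T (play_once t f))"
proof -
  have \<Omega>: "prob_space (PiM {1..T} (\<lambda>_. Q))" by (intro prob_space_PiM \<open>prob_space Q\<close>)
  have f_meas_Q: "f \<in> borel_measurable Q"
    using f_meas by (simp add: measurable_cong_sets[OF sets_Q refl])
  have f_nonneg': "\<forall>z\<in>space Q. 0 \<le> f z"
    using f_nonneg by (simp add: sets_eq_imp_space_eq[OF sets_Q])
  have "(\<lambda>z. ennreal (C t * f z)) \<in> borel_measurable Q"
    using f_meas_Q by (intro measurable_compose[OF _ measurable_ennreal] borel_measurable_times borel_measurable_const)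
  then have "(\<integral>\<^sup>+\<omega>. C t * f (\<omega> t) \<partial>PiM {1..T} (\<lambda>_. Q)) = (\<integral>\<^sup>+z. C t * f z \<partial>Q)"
    by (rule nn_integral_PiM_component[OF \<open>prob_space Q\<close> t])
  also have "\<dots> = (\<integral>\<^sup>+z. ennreal (C t) * ennreal (f z) \<partial>Q)"
    using f_nonneg' \<open>0 < C t\<close> by (intro nn_integral_cong) (simp add: ennreal_mult)
  also have "\<dots> = ennreal (C t) * (\<integral>\<^sup>+z. f z \<partial>Q)"
    using f_meas_Q by (intro nn_integral_cmult) simp
  finally have gain: "(\<integral>\<^sup>+\<omega>. C t * f (\<omega> t) \<partial>PiM {1..T} (\<lambda>_. Q)) = ennreal (C t) * (\<integral>\<^sup>+z. f z \<partial>Q)" .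
  have stake: "(\<integral>\<^sup>+\<omega>. C t \<partial>PiM {1..T} (\<lambda>_. Q)) = ennreal (C t)"
    unfolding nn_integral_const prob_space.emeasure_space_1[OF \<Omega>] by simp
  have "0 \<le> C t * f (\<omega> t)" if "\<omega> \<in> space (PiM {1..T} (\<lambda>_. Q))" for \<omega>
    using that t f_nonneg' \<open>0 < C t\<close> by (auto simp: space_PiM PiE_iff intro!: mult_nonneg_nonneg)
  moreover have "(\<lambda>\<omega>. C t * f (\<omega> t)) \<in> borel_measurable (PiM {1..T} (\<lambda>_. Q))"
    using measurable_compose[OF measurable_component_singleton[OF t] f_meas_Q] by simp
  ultimately have "ext_expectation (PiM {1..T} (\<lambda>_. Q)) (payoff C T (play_once t f))
      = enn2ereal (\<integral>\<^sup>+\<omega>. C t * f (\<omega> t) \<partial>PiM {1..T} (\<lambda>_. Q))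
        - enn2ereal (\<integral>\<^sup>+\<omega>. C t \<partial>PiM {1..T} (\<lambda>_. Q))"
    unfolding payoff_play_once[OF t] using \<open>0 < C t\<close> stake by (intro ext_expectation_diff) auto
  also have "\<dots> = enn2ereal (ennreal (C t) * (\<integral>\<^sup>+z. f z \<partial>Q)) - enn2ereal (ennreal (C t))"
    by (simp only: gain stake)
  also have "\<dots> > 0"
  proof -
    have "ennreal (C t) < ennreal (C t) * (\<integral>\<^sup>+z. f z \<partial>Q)"
      using ennreal_mult_strict_left_mono[OF not_e_value, of "ennreal (C t)"] \<open>0 < C t\<close> by simp
    then show ?thesis by (simp add: ereal_diff_gr0 less_ennreal.rep_eq)
  qed
  finally show ?thesis .
qed

lemma incentive_aligned_if_menus_e_values:
  assumes menus: "\<forall>t\<in>{1..T}. F t \<subseteq> e_values M P \<Theta>0"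
    and prob: "\<And>\<theta>. \<theta> \<in> \<Theta>0 \<Longrightarrow> prob_space (P \<theta>) \<and> sets (P \<theta>) = sets M"
    and C_pos: "\<And>t. t \<in> {1..T} \<Longrightarrow> 0 < C t"
  shows "incentive_aligned M P \<Theta>0 F C T"
proof -
  have e_value: "e_value M P \<Theta>0 f" if "t \<in> {1..T}" and "f \<in> F t" for t f
    using menus that by (auto simp: e_values_def)
  have "ext_expectation (PiM {1..T} (\<lambda>_. P \<theta>)) (payoff C T \<sigma>) \<le> 0"
    if "\<theta> \<in> \<Theta>0" and "admissible M F C T \<sigma>" for \<theta> \<sigma>
  proof (rule ext_expectation_payoff_nonpos)
    show "prob_space (P \<theta>)" "sets (P \<theta>) = sets M" using prob \<open>\<theta> \<in> \<Theta>0\<close> by auto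
    show "\<And>t f. t \<in> {1..T} \<Longrightarrow> f \<in> F t \<Longrightarrow>
            f \<in> borel_measurable M \<and> (\<forall>z\<in>space M. 0 \<le> f z) \<and> (\<integral>\<^sup>+z. f z \<partial>P \<theta>) \<le> 1"
      using e_value \<open>\<theta> \<in> \<Theta>0\<close> unfolding e_value_def by blast
  qed (use that C_pos in simp_all)
  then show ?thesis
    unfolding incentive_aligned_def game_space_def by blast
qed

lemma profitable_play_if_menu_not_e_values:
  assumes t: "t \<in> {1..T}" and not_e_values: "\<not> F t \<subseteq> e_values M P \<Theta>0"
    and prob: "\<And>\<theta>. \<theta> \<in> \<Theta>0 \<Longrightarrow> prob_space (P \<theta>) \<and> sets (P \<theta>) = sets M"
    and C_pos: "\<And>t. t \<in> {1..T} \<Longrightarrow> 0 < C t"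
    and menus: "\<And>t f. t \<in> {1..T} \<Longrightarrow> f \<in> F t \<Longrightarrow> f \<in> borel_measurable M \<and> (\<forall>z\<in>space M. 0 \<le> f z)"
  shows "\<exists>\<theta>0\<in>\<Theta>0. \<exists>\<sigma>. admissible M F C T \<sigma> \<and> ext_expectation (game_space P \<theta>0 T) (payoff C T \<sigma>) > 0"
proof -
  obtain f where "f \<in> F t" and "\<not> e_value M P \<Theta>0 f"
    using not_e_values unfolding e_values_def by blast
  moreover have f: "f \<in> borel_measurable M" "\<forall>z\<in>space M. 0 \<le> f z"
    using menus[OF t \<open>f \<in> F t\<close>] by auto
  ultimately obtain \<theta> where "\<theta> \<in> \<Theta>0" and not_e_value: "1 < (\<integral>\<^sup>+z. f z \<partial>P \<theta>)"
    by (auto simp: e_value_def not_le)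
  have "prob_space (P \<theta>)" "sets (P \<theta>) = sets M"
    using prob \<open>\<theta> \<in> \<Theta>0\<close> by auto
  then have "0 < ext_expectation (game_space P \<theta> T) (payoff C T (play_once t f))"
    unfolding game_space_def
    using ext_expectation_payoff_play_once_pos t f C_pos[OF t] not_e_value by blast
  moreover have "admissible M F C T (play_once t f)"
    using admissible_play_once t \<open>f \<in> F t\<close> f C_pos[OF t] by blast
  ultimately show ?thesis
    using \<open>\<theta> \<in> \<Theta>0\<close> by blast
qed

theorem propositionB1:
  fixes M :: "'z measure" and P :: "'th \<Rightarrow> 'z measure" and \<Theta>0 \<Theta>1 :: "'th set"
    and T :: nat and C :: "nat \<Rightarrow> real" and F :: "nat \<Rightarrow> ('z \<Rightarrow> real) set"
  assumes disj: "\<Theta>0 \<inter> \<Theta>1 = {}"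
    and prob: "\<And>\<theta>. \<theta> \<in> \<Theta>0 \<union> \<Theta>1 \<Longrightarrow> prob_space (P \<theta>) \<and> sets (P \<theta>) = sets M"
    and T_pos: "1 \<le> T"
    and C_pos: "\<And>t. t \<in> {1..T} \<Longrightarrow> 0 < C t"
    and menus: "\<And>t f. t \<in> {1..T} \<Longrightarrow> f \<in> F t \<Longrightarrow>
                   f \<in> borel_measurable M \<and> (\<forall>z\<in>space M. 0 \<le> f z)"
  shows "((\<forall>t\<in>{1..T}. F t \<subseteq> e_values M P \<Theta>0) \<longrightarrow> incentive_aligned M P \<Theta>0 F C T)
       \<and> ((\<exists>t\<in>{1..T}. \<not> F t \<subseteq> e_values M P \<Theta>0) \<longrightarrow>
            (\<exists>\<theta>0\<in>\<Theta>0. \<exists>\<sigma>. admissible M F C T \<sigma> \<and>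
                ext_expectation (game_space P \<theta>0 T) (payoff C T \<sigma>) > 0))"
proof (intro conjI impI)
  show "incentive_aligned M P \<Theta>0 F C T" if "\<forall>t\<in>{1..T}. F t \<subseteq> e_values M P \<Theta>0"
    using that by (rule incentive_aligned_if_menus_e_values) (use prob C_pos in auto)
  show "\<exists>\<theta>0\<in>\<Theta>0. \<exists>\<sigma>. admissible M F C T \<sigma> \<and> ext_expectation (game_space P \<theta>0 T) (payoff C T \<sigma>) > 0"
    if "\<exists>t\<in>{1..T}. \<not> F t \<subseteq> e_values M P \<Theta>0"
  proof -
    from that obtain t where "t \<in> {1..T}" and "\<not> F t \<subseteq> e_values M P \<Theta>0" by blast
    then show ?thesis
      by (rule profitable_play_if_menu_not_e_values) (use prob C_pos menus in auto)
  qed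
qed

end
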